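(* Let $s$ be a term such that $s\succ^k t$ for some abstraction $t$. Then $\tau_s\succ^{3k+1}([],[P])$ in the substitution machine for some program $P$ with $P\gg t$.
   Context: Terms (de Bruijn): $s::=n\mid st\mid\lambda s$. Term substitution: $k^k_u=u$, $n^k_u=n$ ($n\ne k$), $(st)^k_u=(s^k_u)(t^k_u)$, $(\lambda s)^k_u=\lambda(s^{k+1}_u)$. Reduction $\succ$: $(\lambda s)(\lambda t)\succ s^0_{\lambda t}$; $s\succ s'\Rightarrow st\succ s't$; $t\succ t'\Rightarrow(\lambda s)t\succ(\lambda s)t'$; $\succ^k$ is $k$-fold reduction. Programs are lists of commands $\mathsf{ret},\mathsf{var}\,n,\mathsf{lam},\mathsf{app}$. Compilation: $\gamma n=[\mathsf{var}\,n]$, $\gamma(st)=\gamma s++\gamma t++[\mathsf{app}]$, $\gamma(\lambda s)=\mathsf{lam}::\gamma s++[\mathsf{ret}]$. $P\gg s$ holds iff $P=\gamma u$ and $s=\lambda u$ for some $u$. $\varphi P:=\varphi_{0,[]}P$ with $\varphi_{0,Q}(\mathsf{ret}::P)=(Q,P)$, $\varphi_{k+1,Q}(\mathsf{ret}::P)=\varphi_{k,Q++[\mathsf{ret}]}P$, $\varphi_{k,Q}(\mathsf{lam}::P)=\varphi_{k+1,Q++[\mathsf{lam}]}P$, $\varphi_{k,Q}(c::P)=\varphi_{k,Q++[c]}P$ for $c$ a $\mathsf{var}$ or $\mathsf{app}$, undefined otherwise. Program substitution: $(\mathsf{var}\,k::P)^k_Q=Q++P^k_Q$; $(\mathsf{var}\,n::P)^k_Q=\mathsf{var}\,n::P^k_Q$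 ($n\ne k$); $(\mathsf{lam}::P)^k_Q=\mathsf{lam}::P^{k+1}_Q$; $(\mathsf{app}::P)^k_Q=\mathsf{app}::P^k_Q$; $(\mathsf{ret}::P)^0_Q=[\mathsf{ret}]$; $(\mathsf{ret}::P)^{k+1}_Q=\mathsf{ret}::P^k_Q$; $[]^k_Q=[]$. The substitution machine has states $(T,V)$ with $T,V$ lists of programs, and steps: $((\mathsf{lam}::P)::T,V)\succ(P'::_{tc}T,\ Q::V)$ if $\varphi P=(Q,P')$; $((\mathsf{app}::P)::T,\ Q::R::V)\succ(R^0_{\mathsf{lam}::Q++[\mathsf{ret}]}::(P::_{tc}T),\ V)$; where $P::_{tc}T:=T$ if $P=[]$ and $P::T$ otherwise. The initial state is $\tau_s:=([\gamma s],[])$. *)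

theory Defs
  imports Main
begin

datatype tm = Var nat | App tm tm | Lam tm

fun subst :: "tm \<Rightarrow> nat \<Rightarrow> tm \<Rightarrow> tm" where
  "subst (Var n) k u = (if n = k then u else Var n)"
| "subst (App s t) k u = App (subst s k u) (subst t k u)"
| "subst (Lam s) k u = Lam (subst s (Suc k) u)"

inductive step :: "tm \<Rightarrow> tm \<Rightarrow> bool" where
  stepBeta: "step (App (Lam s) (Lam t)) (subst s 0 (Lam t))"
| stepAppL: "step s s' \<Longrightarrow> step (App s t) (App s' t)"
| stepAppR: "step t t' \<Longrightarrow> step (App (Lam s) t) (App (Lam s) t')"

datatype cmd = cRet | cVar nat | cLam | cApp

fun gamma :: "tm \<Rightarrow> cmd list" where
  "gamma (Var n) = [cVar n]"
| "gamma (App s t) = gamma s @ gamma t @ [cApp]"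
| "gamma (Lam s) = cLam # gamma s @ [cRet]"

definition repr :: "cmd list \<Rightarrow> tm \<Rightarrow> bool" where
  "repr P s \<longleftrightarrow> (\<exists>u. P = gamma u \<and> s = Lam u)"

fun phi_aux :: "nat \<Rightarrow> cmd list \<Rightarrow> cmd list \<Rightarrow> (cmd list \<times> cmd list) option" where
  "phi_aux 0 Q (cRet # P) = Some (Q, P)"
| "phi_aux (Suc k) Q (cRet # P) = phi_aux k (Q @ [cRet]) P"
| "phi_aux k Q (cLam # P) = phi_aux (Suc k) (Q @ [cLam]) P"
| "phi_aux k Q (cVar n # P) = phi_aux k (Q @ [cVar n]) P"
| "phi_aux k Q (cApp # P) = phi_aux k (Q @ [cApp]) P"
| "phi_aux k Q [] = None"

definition phi :: "cmd list \<Rightarrow> (cmd list \<times> cmd list) option" where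
  "phi P = phi_aux 0 [] P"

fun psubst :: "cmd list \<Rightarrow> nat \<Rightarrow> cmd list \<Rightarrow> cmd list" where
  "psubst (cVar n # P) k Q = (if n = k then Q @ psubst P k Q else cVar n # psubst P k Q)"
| "psubst (cLam # P) k Q = cLam # psubst P (Suc k) Q"
| "psubst (cApp # P) k Q = cApp # psubst P k Q"
| "psubst (cRet # P) 0 Q = [cRet]"
| "psubst (cRet # P) (Suc k) Q = cRet # psubst P k Q"
| "psubst [] k Q = []"

definition tc_cons :: "cmd list \<Rightarrow> cmd list list \<Rightarrow> cmd list list" where
  "tc_cons P T = (if P = [] then T else P # T)"

type_synonym state = "cmd list list \<times> cmd list list"

inductive mstep :: "state \<Rightarrow> state \<Rightarrow> bool" where
  mLam: "phi P = Some (Q, P') \<Longrightarrow> mstep ((cLam # P) # T, V) (tc_cons P' T, Q # V)"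
| mApp: "mstep ((cApp # P) # T, Q # R # V)
           (psubst R 0 (cLam # Q @ [cRet]) # tc_cons P T, V)"

definition init :: "tm \<Rightarrow> state" where
  "init s = ([gamma s], [])"

end

theory Submission
  imports Defs
begin

text \<open>A reduction sequence of length k from s to an abstraction Lam u is turned into a big-step
  derivation big_step s k u, whose weight k counts the beta steps. By induction on that derivation,
  running the compiled code of s on top of an arbitrary task stack and value stack takes
  exactly 3k + 1 machine steps and pushes the code of the body of the value: every
  abstraction costs one lam-step, and every beta-redex adds one app-step to the two
  lam-steps of the abstractions it consumes.\<close>

inductive big_step :: "tm \<Rightarrow> nat \<Rightarrow> tm \<Rightarrow> bool" where
  big_step_Lam: "big_step (Lam s) 0 s"
| big_step_App: "big_step s k\<^sub>1 s' \<Longrightarrow> big_step t k\<^sub>2 t' \<Longrightarrow> big_step (subst s' 0 (Lam t')) k\<^sub>3 v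
    \<Longrightarrow> big_step (App s t) (k\<^sub>1 + k\<^sub>2 + k\<^sub>3 + 1) v"

lemma step_big_step:
  assumes "step s s'" and "big_step s' k v"
  shows "big_step s (Suc k) v"
  using assms
proof (induction s s' arbitrary: k v rule: step.induct)
  case (stepBeta s t)
  have "big_step (App (Lam s) (Lam t)) (0 + 0 + k + 1) v"
    using big_step_Lam big_step_Lam stepBeta.prems by (rule big_step_App)
  then show ?case by simp
next
  case (stepAppL s s' t)
  from stepAppL.prems show ?case
  proof cases
    case (big_step_App k\<^sub>1 s\<^sub>0 k\<^sub>2 t' k\<^sub>3)
    have "big_step (App s t) (Suc k\<^sub>1 + k\<^sub>2 + k\<^sub>3 + 1) v"
      using stepAppL.IH[OF big_step_App(2)] big_step_App(3,4) by (rule big_step.big_step_App)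
    then show ?thesis using big_step_App(1) by simp
  qed
next
  case (stepAppR t t' s)
  from stepAppR.prems show ?case
  proof cases
    case (big_step_App k\<^sub>1 s\<^sub>0 k\<^sub>2 t\<^sub>0 k\<^sub>3)
    have "big_step (App (Lam s) t) (k\<^sub>1 + Suc k\<^sub>2 + k\<^sub>3 + 1) v"
      using big_step_App(2) stepAppR.IH[OF big_step_App(3)] big_step_App(4)
      by (rule big_step.big_step_App)
    then show ?thesis using big_step_App(1) by simp
  qed
qed

lemma relpowp_step_big_step:
  assumes "(step ^^ k) s (Lam u)"
  shows "big_step s k u"
  using assms
proof (induction k arbitrary: s)
  case 0
  then show ?case by (simp add: big_step_Lam)
next
  case (Suc k)
  then obtain s' where "step s s'" and "(step ^^ k) s' (Lam u)"
    by (metis relpowp_Suc_D2)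
  then show ?case using Suc.IH step_big_step by blast
qed

lemma phi_aux_gamma_append: "phi_aux k Q (gamma u @ P) = phi_aux k (Q @ gamma u) P"
  by (induction u arbitrary: k Q P) auto

lemma phi_gamma_Ret: "phi (gamma u @ cRet # P) = Some (gamma u, P)"
  using phi_aux_gamma_append[of 0 "[]" u "cRet # P"] by (simp add: phi_def)

lemma psubst_gamma_append:
  "psubst (gamma u @ P) k (gamma w) = gamma (subst u k w) @ psubst P k (gamma w)"
  by (induction u arbitrary: k P) auto

lemma psubst_gamma: "psubst (gamma u) k (gamma w) = gamma (subst u k w)"
  using psubst_gamma_append[of u "[]" k w] by simp

lemma big_step_machine:
  assumes "big_step s k u"
  shows "(mstep ^^ (3 * k + 1)) ((gamma s @ P) # T, V) (tc_cons P T, gamma u # V)"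
  using assms
proof (induction s k u arbitrary: P T V rule: big_step.induct)
  case (big_step_Lam s)
  have "mstep ((gamma (Lam s) @ P) # T, V) (tc_cons P T, gamma s # V)"
    using mLam[OF phi_gamma_Ret] by simp
  then show ?case by (simp del: relpowp.simps add: relpowp_1)
next
  case (big_step_App s k\<^sub>1 s' t k\<^sub>2 t' k\<^sub>3 v)
  have left: "(mstep ^^ (3 * k\<^sub>1 + 1)) ((gamma (App s t) @ P) # T, V)
      ((gamma t @ cApp # P) # T, gamma s' # V)"
    using big_step_App.IH(1)[of "gamma t @ cApp # P" T V] by (simp add: tc_cons_def)
  have right: "(mstep ^^ (3 * k\<^sub>2 + 1)) ((gamma t @ cApp # P) # T, gamma s' # V)
      ((cApp # P) # T, gamma t' # gamma s' # V)"
    using big_step_App.IH(2)[of "cApp # P" T "gamma s' # V"] by (simp add: tc_cons_def)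
  have beta: "mstep ((cApp # P) # T, gamma t' # gamma s' # V)
      (gamma (subst s' 0 (Lam t')) # tc_cons P T, V)"
    using mApp[of P T "gamma t'" "gamma s'" V] psubst_gamma[of s' 0 "Lam t'"] by simp
  have body: "(mstep ^^ (3 * k\<^sub>3 + 1)) (gamma (subst s' 0 (Lam t')) # tc_cons P T, V)
      (tc_cons P T, gamma v # V)"
    using big_step_App.IH(3)[of "[]" "tc_cons P T" V] by (simp add: tc_cons_def)
  have "(mstep ^^ (3 * k\<^sub>1 + 1 + (3 * k\<^sub>2 + 1) + Suc (3 * k\<^sub>3 + 1)))
      ((gamma (App s t) @ P) # T, V) (tc_cons P T, gamma v # V)"
    using relpowp_trans[OF relpowp_trans[OF left right] relpowp_Suc_I2[OF beta body]] .
  moreover have "3 * k\<^sub>1 + 1 + (3 * k\<^sub>2 + 1) + Suc (3 * k\<^sub>3 + 1) = 3 * (k\<^sub>1 + k\<^sub>2 + k\<^sub>3 + 1) + 1"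
    by simp
  ultimately show ?case by metis
qed

theorem theorem14:
  fixes s t :: tm and k :: nat
  assumes "(step ^^ k) s t"
    and "\<exists>u. t = Lam u"
  shows "\<exists>P. (mstep ^^ (3 * k + 1)) (init s) ([], [P]) \<and> repr P t"
proof -
  obtain u where t: "t = Lam u" using assms(2) by blast
  with assms(1) have "big_step s k u" by (simp add: relpowp_step_big_step)
  from big_step_machine[OF this, of "[]" "[]" "[]"]
  have "(mstep ^^ (3 * k + 1)) (init s) ([], [gamma u])"
    by (simp add: init_def tc_cons_def)
  then show ?thesis using t repr_def by blast
qed

end
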